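(* Let $L\ge 1$ and let $G=\mathbb{Z}_L^2=(V,E)$ be the $L\times L$ square lattice with periodic boundary conditions (the discrete torus), with $m=|E|=2L^2$ edges. Let $A\subseteq E$ be a random bond configuration of bond percolation with parameter $p=1/2$, i.e. each edge is included in $A$ independently with probability $1/2$. For the loop configuration associated with $A$ (defined in the context), let $N_1(A)$ be the number of edges $e\in A$ whose two associated loop segments belong to the same loop, and $N_2(A)$ the number of edges $e\in A$ whose two associated loop segments belong to distinct loops. Set $\mathcal{L}_1=N_1(A)/m$ and $\mathcal{L}_2=N_2(A)/m$. Then for every $L$, $$\mathbb{E}\,\mathcal{L}_1=\mathbb{E}\,\mathcal{L}_2=\tfrac14 .$$
   Context: Loop (Baxter–Kelland–Wu) configuration: the medial graph of $G$ (embedded on the torus) has one vertex $v_e$ at the midpoint of each edge $e\in E$, and a medial edge joining $v_e$ and $v_{e'}$ whenever $e,e'$ are consecutive edges on the boundary of a common face $f$ and share an endpoint $x$. Thus the four medial edges at $v_e$ are indexed by pairs $(x,f)$ with $x$ an endpoint of $e$ and $f$ one of the two faces adjacent to $e$. Given $A\subseteq E$, at each $v_e$ the four incident medial edges are paired into two non-crossing arcs: if $e\in A$ (occupied), $(x,f)$ is paired with $(y,f)$ for each adjacent face $f$ (where $x,y$ are the endpoints of $e$), so the arcs run alongside $e$ on either side without crossing it; if $e\notin A$, $(x,f)$ is paired with $(x,f')$ for each endpoint $x$ (where $f,f'$ are the two faces adjacent to $e$), so the arcs cross $e$. Following these pairings decomposes the medial edges into disjoint closed curves, the loops. For an occupied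 edge $e\in A$, its two associated loop segments are the two arcs at $v_e$ running alongside $e$ (one on each side). *)

theory Defs
  imports "HOL-Probability.Probability"
begin

text \<open>Edges are pairs (v,d): (v,H) joins v to v+(1,0), (v,V) joins v to v+(0,1).
  This gives exactly 2L^2 edges, also for L = 1, 2 (multigraph case).
  Faces are indexed by their lower-left corner v (the square v, v+(1,0), v+(1,1), v+(0,1)).
  Medial edges (corners) are pairs (f,c): face f and a corner position c of that face;
  the corner joins the two boundary edges of f meeting at that corner.\<close>

datatype dir = H | V
datatype pos = SW | SE | NE | NW

type_synonym vtx = "nat \<times> nat"
type_synonym edge = "vtx \<times> dir"
type_synonym corner = "vtx \<times> pos"

definition torus_vertices :: "nat \<Rightarrow> vtx set" where
  "torus_vertices L = {(i, j). i < L \<and> j < L}"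

definition torus_edges :: "nat \<Rightarrow> edge set" where
  "torus_edges L = torus_vertices L \<times> UNIV"

definition shift_down :: "nat \<Rightarrow> vtx \<Rightarrow> vtx" where
  "shift_down L v = (fst v, (snd v + L - 1) mod L)"

definition shift_left :: "nat \<Rightarrow> vtx \<Rightarrow> vtx" where
  "shift_left L v = ((fst v + L - 1) mod L, snd v)"

text \<open>The two arcs at the medial vertex of edge e, given configuration A.
  Horizontal e = (v,H), endpoints x = v, y = v+(1,0); face above is v (e is its bottom,
  corners (x,above) = (v,SW), (y,above) = (v,SE)); face below is v-(0,1) (e is its top,
  corners (x,below) = (v-(0,1),NW), (y,below) = (v-(0,1),NE)).
  Vertical e = (v,V), endpoints x = v, y = v+(0,1); face right is v (e is its left side,
  corners (v,SW), (v,NW)); face left is v-(1,0) (e is its right side, corners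
  (v-(1,0),SE), (v-(1,0),NE)).
  Occupied: pair (x,f) with (y,f); unoccupied: pair (x,f) with (x,f').\<close>

definition arcs :: "nat \<Rightarrow> edge set \<Rightarrow> edge \<Rightarrow> (corner \<times> corner) set" where
  "arcs L A e = (case e of
     (v, H) \<Rightarrow> (let w = shift_down L v in
        if e \<in> A then {((v, SW), (v, SE)), ((w, NW), (w, NE))}
        else {((v, SW), (w, NW)), ((v, SE), (w, NE))})
   | (v, V) \<Rightarrow> (let w = shift_left L v in
        if e \<in> A then {((v, SW), (v, NW)), ((w, SE), (w, NE))}
        else {((v, SW), (w, SE)), ((v, NW), (w, NE))}))"

definition pairing :: "nat \<Rightarrow> edge set \<Rightarrow> (corner \<times> corner) set" where
  "pairing L A = (\<Union>e\<in>torus_edges L. arcs L A e)"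

definition same_loop :: "nat \<Rightarrow> edge set \<Rightarrow> corner \<Rightarrow> corner \<Rightarrow> bool" where
  "same_loop L A c c' \<longleftrightarrow> (c, c') \<in> (pairing L A \<union> (pairing L A)\<inverse>)\<^sup>*"

text \<open>The two loop segments associated with an occupied edge: one representative medial edge
  from each of the two arcs running alongside e.\<close>
definition seg1 :: "nat \<Rightarrow> edge \<Rightarrow> corner" where
  "seg1 L e = (fst e, SW)"

definition seg2 :: "nat \<Rightarrow> edge \<Rightarrow> corner" where
  "seg2 L e = (case e of (v, H) \<Rightarrow> (shift_down L v, NW) | (v, V) \<Rightarrow> (shift_left L v, SE))"

definition N1 :: "nat \<Rightarrow> edge set \<Rightarrow> nat" where
  "N1 L A = card {e \<in> A. same_loop L A (seg1 L e) (seg2 L e)}"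

definition N2 :: "nat \<Rightarrow> edge set \<Rightarrow> nat" where
  "N2 L A = card {e \<in> A. \<not> same_loop L A (seg1 L e) (seg2 L e)}"

definition perc_half :: "nat \<Rightarrow> edge set pmf" where
  "perc_half L = pmf_of_set (Pow (torus_edges L))"

end

theory Submission
  imports Defs
begin

(*
  Orient every loop; the loops are then the cycles of a permutation of the medial edges. For an
  occupied edge e its two loop segments lie on a common loop iff the two strands entering the
  medial vertex of e do. Toggling e exchanges the successors of these two strands and therefore
  flips whether they are joined, so (A, e) with e vacant and joined corresponds to (A + e, e)
  with e occupied and split. Planar duality (the dual configuration has the same loops, and e is
  occupied iff its dual edge is vacant) matches (A, e) with e occupied and joined to pairs with a
  vacant, joined edge. Summing over e gives sum_A N1(A) = sum_A N2(A); since N1 + N2 = |A| and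
  |A| has mean m/2, both expectations equal 1/4.
*)

definition reach :: "('a \<Rightarrow> 'a) \<Rightarrow> 'a \<Rightarrow> 'a \<Rightarrow> bool" where
  "reach f x y \<longleftrightarrow> (\<exists>n. (f ^^ n) x = y)"

lemma reach_refl: "reach f x x"
  unfolding reach_def by (metis funpow_0)

lemma reach_trans: "reach f x y \<Longrightarrow> reach f y z \<Longrightarrow> reach f x z"
  unfolding reach_def by (metis funpow_add comp_apply)

lemma reach_step: "reach f x (f x)"
  unfolding reach_def by (metis funpow_0 funpow.simps(2) comp_apply)

lemma reach_stepr: "reach f x y \<Longrightarrow> reach f x (f y)"
  by (meson reach_step reach_trans)

lemma reach_stepl: "reach f (f x) y \<Longrightarrow> reach f x y"
  by (meson reach_step reach_trans)

lemma funpow_closed: "\<forall>z\<in>X. f z \<in> X \<Longrightarrow> x \<in> X \<Longrightarrow> (f ^^ n) x \<in> X"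
  by (induction n) auto

lemma reach_closed: "\<forall>z\<in>X. f z \<in> X \<Longrightarrow> x \<in> X \<Longrightarrow> reach f x y \<Longrightarrow> y \<in> X"
  unfolding reach_def using funpow_closed[of X f x] by blast

lemma cycle_image_closed:
  assumes "\<forall>i<j. f (P i) = P (Suc i)" and "f (P j) = P 0"
  shows "\<forall>z\<in>P ` {..j}. f z \<in> P ` {..j}"
proof
  fix z assume "z \<in> P ` {..j}"
  then obtain i where i: "i \<le> j" "z = P i" by blast
  show "f z \<in> P ` {..j}"
  proof (cases "i = j")
    case True
    then show ?thesis using i assms(2) by auto
  next
    case False
    then have "f z = P (Suc i)" using i assms(1) by simp
    then show ?thesis using i False by auto
  qed
qed

locale finite_permutation_on =
  fixes C :: "'a set" and f :: "'a \<Rightarrow> 'a"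
  assumes finite: "finite C" and maps_to: "\<forall>x\<in>C. f x \<in> C" and inj: "inj_on f C"
begin

lemma funpow_in: "x \<in> C \<Longrightarrow> (f ^^ n) x \<in> C"
  using funpow_closed[OF maps_to] by blast

lemma funpow_cancel: "a \<in> C \<Longrightarrow> b \<in> C \<Longrightarrow> (f ^^ n) a = (f ^^ n) b \<Longrightarrow> a = b"
proof (induction n arbitrary: a b)
  case (Suc n)
  have "f a \<in> C" "f b \<in> C" using maps_to Suc.prems(1,2) by auto
  moreover have "(f ^^ n) (f a) = (f ^^ n) (f b)"
    using Suc.prems(3) by (simp add: funpow_Suc_right del: funpow.simps)
  ultimately have "f a = f b" by (rule Suc.IH)
  then show ?case using Suc.prems(1,2) by (rule inj_onD[OF inj])
qed simp

lemma reach_back: assumes x: "x \<in> C" shows "reach f (f x) x"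
proof -
  let ?g = "\<lambda>n. (f ^^ n) x"
  have "?g ` {..card C} \<subseteq> C" using funpow_in[OF x] by auto
  then have "card (?g ` {..card C}) \<le> card C" using finite by (simp add: card_mono)
  then have "\<not> inj_on ?g {..card C}" by (intro pigeonhole) simp
  then obtain i j where "i \<noteq> j" "?g i = ?g j" unfolding inj_on_def by auto
  then obtain i j where "i < j" and ij: "?g i = ?g j" by (metis linorder_neqE_nat)
  then obtain k where "j = i + Suc k" by (auto dest: less_imp_Suc_add)
  then have "(f ^^ i) x = (f ^^ i) ((f ^^ Suc k) x)" using ij by (simp only: funpow_add comp_apply)
  then have "x = (f ^^ Suc k) x" by (rule funpow_cancel[OF x funpow_in[OF x]])
  then have "(f ^^ k) (f x) = x" by (simp add: funpow_Suc_right del: funpow.simps)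
  then show ?thesis unfolding reach_def by blast
qed

lemma reach_sym: assumes x: "x \<in> C" and "reach f x y" shows "reach f y x"
proof -
  have "reach f ((f ^^ n) x) x" for n
  proof (induction n)
    case (Suc n)
    show ?case using reach_trans[OF reach_back[OF funpow_in[OF x]] Suc.IH] by simp
  qed (simp add: reach_refl)
  then show ?thesis using assms(2) unfolding reach_def by blast
qed

lemma reach_succ_left_iff: "x \<in> C \<Longrightarrow> reach f (f x) y \<longleftrightarrow> reach f x y"
  using reach_stepl reach_trans reach_back by metis

lemma reach_succ_right_iff: "y \<in> C \<Longrightarrow> reach f x (f y) \<longleftrightarrow> reach f x y"
  using reach_stepr reach_trans reach_back by metis

lemma rtrancl_graph_iff_reach:
  assumes x: "x \<in> C"
  shows "(x, y) \<in> ({(p, f p) | p. p \<in> C} \<union> {(f p, p) | p. p \<in> C})\<^sup>* \<longleftrightarrow> reach f x y"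
    (is "_ \<in> ?R\<^sup>* \<longleftrightarrow> _")
proof
  assume "(x, y) \<in> ?R\<^sup>*"
  then show "reach f x y"
  proof (induction rule: rtrancl_induct)
    case (step y z)
    then consider "z = f y" | "z \<in> C" "y = f z" by blast
    then show ?case
    proof cases
      case 1
      then show ?thesis using reach_stepr[OF step.IH] by simp
    next
      case 2
      then show ?thesis using reach_trans[OF step.IH] reach_back[of z] by simp
    qed
  qed (simp add: reach_refl)
next
  have "(x, (f ^^ n) x) \<in> ?R\<^sup>*" for n
  proof (induction n)
    case (Suc n)
    have "((f ^^ n) x, (f ^^ Suc n) x) \<in> ?R" using funpow_in[OF x] by auto
    then show ?case using Suc by (meson rtrancl.rtrancl_into_rtrancl)
  qed simp
  then show "reach f x y \<Longrightarrow> (x, y) \<in> ?R\<^sup>*" unfolding reach_def by blast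
qed

lemma image_eq: "f ` C = C"
  using endo_inj_surj[OF finite _ inj] maps_to by blast

text \<open>Swapping the successors of two points b, c: if b and c lie on one cycle of f, the
  swap cuts it into two cycles separating them, and if they lie on different cycles it
  splits them open and glues them into one.\<close>
lemma reach_after_swap:
  assumes b: "b \<in> C" and c: "c \<in> C" and "b \<noteq> c"
    and agree: "\<forall>x\<in>C. x \<noteq> b \<longrightarrow> x \<noteq> c \<longrightarrow> g x = f x"
    and gb: "g b = f c" and gc: "g c = f b"
  shows "reach g b c \<longleftrightarrow> \<not> reach f b c"
proof -
  define P where "P i = (f ^^ i) (f c)" for i
  have PC: "P i \<in> C" for i unfolding P_def using maps_to c by (simp add: funpow_in)
  have fP: "f (P i) = P (Suc i)" for i unfolding P_def by simp
  obtain n where "P n = c" using reach_back[OF c] unfolding reach_def P_def by blast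
  then have "\<exists>i. P i \<in> {b, c}" by blast
  define j where "j = (LEAST i. P i \<in> {b, c})"
  have Pj: "P j \<in> {b, c}" unfolding j_def using \<open>\<exists>i. P i \<in> {b, c}\<close> by (rule LeastI_ex)
  have before: "P i \<notin> {b, c}" if "i < j" for i using that unfolding j_def by (rule not_less_Least)
  have gP: "\<forall>i<j. g (P i) = P (Suc i)" using before agree PC fP by auto
  have hit: "x \<notin> P ` {..j}" if "x \<in> {b, c}" "x \<noteq> P j" for x
    using that before by (auto simp: nat_less_le)
  consider "P j = b" | "P j = c" using Pj by blast
  then show ?thesis
  proof cases
    case 1
    have "(f ^^ Suc j) c = b" using 1 unfolding P_def by (simp add: funpow_Suc_right del: funpow.simps)
    then have "reach f b c" using reach_sym[OF c] unfolding reach_def by blast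
    moreover have "\<forall>z\<in>P ` {..j}. g z \<in> P ` {..j}"
      using cycle_image_closed[OF gP] 1 gb by (simp add: P_def)
    then have "\<not> reach g b c" using reach_closed[of "P ` {..j}" g b c] hit[of c] 1 \<open>b \<noteq> c\<close> by force
    ultimately show ?thesis by blast
  next
    case 2
    have "reach g (P 0) (P i)" if "i \<le> j" for i
      using that
    proof (induction i)
      case (Suc i)
      then show ?case using reach_stepr[of g "P 0" "P i"] gP by simp
    qed (rule reach_refl)
    then have "reach g (P 0) c" using 2 by (metis order_refl)
    then have "reach g b c" using reach_trans[OF reach_step[of g b]] gb by (simp add: P_def)
    moreover have "\<forall>z\<in>P ` {..j}. f z \<in> P ` {..j}"
      using cycle_image_closed[of j f P] fP 2 by (simp add: P_def)
    then have "\<not> reach f c b" using reach_closed[of "P ` {..j}" f c b] hit[of b] 2 \<open>b \<noteq> c\<close> by force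
    then have "\<not> reach f b c" using reach_sym[OF b] by blast
    ultimately show ?thesis by blast
  qed
qed

lemma reach_reverse_conj:
  assumes inj_psi: "inj_on \<psi> C" and reverse: "\<forall>p\<in>C. g (\<psi> (f p)) = \<psi> p"
    and x: "x \<in> C" and y: "y \<in> C"
  shows "reach g (\<psi> x) (\<psi> y) \<longleftrightarrow> reach f y x"
proof
  assume "reach g (\<psi> x) (\<psi> y)"
  then obtain n where "(g ^^ n) (\<psi> x) = \<psi> y" unfolding reach_def by blast
  then show "reach f y x" using x
  proof (induction n arbitrary: x)
    case 0
    then have "x = y" using inj_onD[OF inj_psi _ _ y] by simp
    then show ?case by (simp add: reach_refl)
  next
    case (Suc n)
    obtain z where z: "z \<in> C" "x = f z" using image_eq Suc.prems(2) by blast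
    then have "(g ^^ n) (\<psi> z) = \<psi> y"
      using Suc.prems(1) reverse by (simp add: funpow_Suc_right del: funpow.simps)
    then have "reach f y z" using Suc.IH z(1) by blast
    then show ?case using z(2) reach_stepr by metis
  qed
next
  have "(g ^^ n) (\<psi> ((f ^^ n) z)) = \<psi> z" if "z \<in> C" for z n
    using that
  proof (induction n arbitrary: z)
    case (Suc n)
    have "(g ^^ n) (\<psi> ((f ^^ n) (f z))) = \<psi> (f z)" using Suc maps_to by blast
    then show ?case using reverse Suc.prems by (simp add: funpow_swap1)
  qed simp
  then show "reach f y x \<Longrightarrow> reach g (\<psi> x) (\<psi> y)" using y unfolding reach_def by blast
qed

end

definition shift_up :: "nat \<Rightarrow> vtx \<Rightarrow> vtx" where
  "shift_up L v = (fst v, (snd v + 1) mod L)"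

definition shift_right :: "nat \<Rightarrow> vtx \<Rightarrow> vtx" where
  "shift_right L v = ((fst v + 1) mod L, snd v)"

definition corners :: "nat \<Rightarrow> corner set" where
  "corners L = torus_vertices L \<times> UNIV"

lemma mod_Suc_pred: assumes "j < L" shows "Suc ((j + L - Suc 0) mod L) mod L = j"
proof (cases j)
  case 0
  then show ?thesis using assms by (cases L) auto
next
  case (Suc k)
  then have "(j + L - Suc 0) mod L = k" using assms by simp
  then show ?thesis using Suc assms by simp
qed

lemma mod_pred_Suc: assumes "j < L" shows "(Suc j mod L + L - Suc 0) mod L = j"
proof (cases "Suc j = L")
  case False
  then have "Suc j mod L = Suc j" using assms by simp
  then show ?thesis using assms by simp
qed (use assms in simp)

lemmas torus_simps = shift_up_def shift_right_def shift_down_def shift_left_def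
  torus_vertices_def corners_def torus_edges_def mod_Suc_pred mod_pred_Suc

text \<open>Loops are oriented so that every medial edge runs clockwise around its face: the medial
  edge at corner SE of face f runs from the right side of f to its bottom side (f, H), where it
  either turns along that edge (if occupied) or crosses into the face below.\<close>
fun loop_next :: "nat \<Rightarrow> edge set \<Rightarrow> corner \<Rightarrow> corner" where
  "loop_next L A (f, SE) = (if (f, H) \<in> A then (f, SW) else (shift_down L f, NE))"
| "loop_next L A (f, NW) = (if (shift_up L f, H) \<in> A then (f, NE) else (shift_up L f, SW))"
| "loop_next L A (f, SW) = (if (f, V) \<in> A then (f, NW) else (shift_left L f, SE))"
| "loop_next L A (f, NE) = (if (shift_right L f, V) \<in> A then (f, SE) else (shift_right L f, NW))"

fun loop_prev :: "nat \<Rightarrow> edge set \<Rightarrow> corner \<Rightarrow> corner" where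
  "loop_prev L A (f, SW) = (if (f, H) \<in> A then (f, SE) else (shift_down L f, NW))"
| "loop_prev L A (f, NE) = (if (shift_up L f, H) \<in> A then (f, NW) else (shift_up L f, SE))"
| "loop_prev L A (f, NW) = (if (f, V) \<in> A then (f, SW) else (shift_left L f, NE))"
| "loop_prev L A (f, SE) = (if (shift_right L f, V) \<in> A then (f, NE) else (shift_right L f, SW))"

lemma loop_next_in: "L \<ge> 1 \<Longrightarrow> p \<in> corners L \<Longrightarrow> loop_next L A p \<in> corners L"
  by (cases p, cases "snd p") (auto simp: torus_simps)

lemma loop_prev_loop_next: "L \<ge> 1 \<Longrightarrow> p \<in> corners L \<Longrightarrow> loop_prev L A (loop_next L A p) = p"
  by (cases p, cases "snd p") (auto simp: torus_simps)

lemma finite_corners: "finite (corners L)"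
proof -
  have "torus_vertices L = {..<L} \<times> {..<L}" unfolding torus_vertices_def by auto
  moreover have "(UNIV :: pos set) = {SW, SE, NE, NW}" using pos.exhaust by auto
  ultimately show ?thesis unfolding corners_def by (metis finite_SigmaI finite_insert finite.emptyI finite_lessThan)
qed

lemma finite_torus_edges: "finite (torus_edges L)"
proof -
  have "torus_vertices L = {..<L} \<times> {..<L}" unfolding torus_vertices_def by auto
  moreover have "(UNIV :: dir set) = {H, V}" using dir.exhaust by auto
  ultimately show ?thesis unfolding torus_edges_def by (metis finite_SigmaI finite_insert finite.emptyI finite_lessThan)
qed

lemma loop_next_permutation: "L \<ge> 1 \<Longrightarrow> finite_permutation_on (corners L) (loop_next L A)"
  unfolding finite_permutation_on_def
  using finite_corners loop_next_in inj_on_inverseI[of "corners L" "loop_prev L A" "loop_next L A"]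
    loop_prev_loop_next by blast

lemma arcs_loop_next:
  assumes "L \<ge> 1" and "e \<in> torus_edges L" and "(p, q) \<in> arcs L A e"
  shows "p \<in> corners L \<and> q = loop_next L A p \<or> q \<in> corners L \<and> p = loop_next L A q"
proof -
  obtain i j d where e: "e = ((i, j), d)" by (metis prod.exhaust)
  show ?thesis using assms unfolding e arcs_def Let_def
    by (cases d; cases "((i, j), d) \<in> A") (auto simp: torus_simps)
qed

lemma loop_next_arcs:
  assumes L: "L \<ge> 1" and p: "p \<in> corners L"
  shows "\<exists>e\<in>torus_edges L. (p, loop_next L A p) \<in> arcs L A e \<or> (loop_next L A p, p) \<in> arcs L A e"
proof -
  obtain i j q where pq: "p = ((i, j), q)" by (metis prod.exhaust)
  have ij: "i < L" "j < L" using p unfolding pq torus_simps by auto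
  show ?thesis
  proof (cases q)
    case SW
    show ?thesis
      by (rule bexI[of _ "((i, j), V)"]) (use ij L in \<open>auto simp: pq SW arcs_def Let_def torus_simps\<close>)
  next
    case SE
    show ?thesis
      by (rule bexI[of _ "((i, j), H)"]) (use ij L in \<open>auto simp: pq SE arcs_def Let_def torus_simps\<close>)
  next
    case NE
    show ?thesis
      by (rule bexI[of _ "(shift_right L (i, j), V)"]) (use ij L in \<open>auto simp: pq NE arcs_def Let_def torus_simps\<close>)
  next
    case NW
    show ?thesis
      by (rule bexI[of _ "(shift_up L (i, j), H)"]) (use ij L in \<open>auto simp: pq NW arcs_def Let_def torus_simps\<close>)
  qed
qed

lemma pairing_symmetric_closure:
  assumes L: "L \<ge> 1"
  shows "pairing L A \<union> (pairing L A)\<inverse> =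
    {(p, loop_next L A p) | p. p \<in> corners L} \<union> {(loop_next L A p, p) | p. p \<in> corners L}"
proof (intro equalityI subsetI)
  fix x assume "x \<in> pairing L A \<union> (pairing L A)\<inverse>"
  then obtain p q e where "x = (p, q) \<or> x = (q, p)" "e \<in> torus_edges L" "(p, q) \<in> arcs L A e"
    unfolding pairing_def by (cases x) blast
  with arcs_loop_next[OF L] show "x \<in> {(p, loop_next L A p) | p. p \<in> corners L} \<union> {(loop_next L A p, p) | p. p \<in> corners L}"
    by blast
next
  fix x assume "x \<in> {(p, loop_next L A p) | p. p \<in> corners L} \<union> {(loop_next L A p, p) | p. p \<in> corners L}"
  then obtain p where p: "p \<in> corners L" "x = (p, loop_next L A p) \<or> x = (loop_next L A p, p)"
    by blast
  from loop_next_arcs[OF L p(1), of A] obtain e where "e \<in> torus_edges L"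
    "(p, loop_next L A p) \<in> arcs L A e \<or> (loop_next L A p, p) \<in> arcs L A e" by blast
  then show "x \<in> pairing L A \<union> (pairing L A)\<inverse>" using p(2) unfolding pairing_def by blast
qed

lemma same_loop_iff_reach:
  assumes L: "L \<ge> 1" and x: "x \<in> corners L"
  shows "same_loop L A x y \<longleftrightarrow> reach (loop_next L A) x y"
  unfolding same_loop_def pairing_symmetric_closure[OF L]
  using finite_permutation_on.rtrancl_graph_iff_reach[OF loop_next_permutation[OF L] x] .

text \<open>The two medial edges running into the medial vertex of e; their successors are the two
  medial edges leaving it, and toggling e exchanges these successors.\<close>
fun incoming1 :: "nat \<Rightarrow> edge \<Rightarrow> corner" where
  "incoming1 L (v, H) = (v, SE)"
| "incoming1 L (v, V) = (v, SW)"

fun incoming2 :: "nat \<Rightarrow> edge \<Rightarrow> corner" where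
  "incoming2 L (v, H) = (shift_down L v, NW)"
| "incoming2 L (v, V) = (shift_left L v, NE)"

definition strands_joined :: "nat \<Rightarrow> edge set \<Rightarrow> edge \<Rightarrow> bool" where
  "strands_joined L A e \<longleftrightarrow> reach (loop_next L A) (incoming1 L e) (incoming2 L e)"

lemma incoming1_in: "L \<ge> 1 \<Longrightarrow> e \<in> torus_edges L \<Longrightarrow> incoming1 L e \<in> corners L"
  by (cases e, cases "snd e") (auto simp: torus_simps)

lemma incoming2_in: "L \<ge> 1 \<Longrightarrow> e \<in> torus_edges L \<Longrightarrow> incoming2 L e \<in> corners L"
  by (cases e, cases "snd e") (auto simp: torus_simps)

lemma incoming1_neq_incoming2: "incoming1 L e \<noteq> incoming2 L e"
  by (cases e, cases "snd e") auto

lemma loop_next_insert_other: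
  assumes "e \<in> torus_edges L" and "p \<in> corners L"
    and "p \<noteq> incoming1 L e" and "p \<noteq> incoming2 L e"
  shows "loop_next L (insert e A) p = loop_next L A p"
proof -
  obtain i j q where p: "p = ((i, j), q)" by (metis prod.exhaust)
  obtain a b d where e: "e = ((a, b), d)" by (metis prod.exhaust)
  show ?thesis using assms unfolding p e by (cases q; cases d) (auto simp: torus_simps)
qed

lemma loop_next_insert_incoming:
  assumes "e \<in> torus_edges L" and "e \<notin> A"
  shows "loop_next L (insert e A) (incoming1 L e) = loop_next L A (incoming2 L e)"
    and "loop_next L (insert e A) (incoming2 L e) = loop_next L A (incoming1 L e)"
proof -
  obtain a b d where e: "e = ((a, b), d)" by (metis prod.exhaust)
  show "loop_next L (insert e A) (incoming1 L e) = loop_next L A (incoming2 L e)"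
    using assms unfolding e by (cases d) (auto simp: torus_simps)
  show "loop_next L (insert e A) (incoming2 L e) = loop_next L A (incoming1 L e)"
    using assms unfolding e by (cases d) (auto simp: torus_simps)
qed

lemma strands_joined_insert:
  assumes L: "L \<ge> 1" and e: "e \<in> torus_edges L" and "e \<notin> A"
  shows "strands_joined L (insert e A) e \<longleftrightarrow> \<not> strands_joined L A e"
  unfolding strands_joined_def
  using finite_permutation_on.reach_after_swap[OF loop_next_permutation[OF L]
      incoming1_in[OF L e] incoming2_in[OF L e] incoming1_neq_incoming2]
    loop_next_insert_other[OF e] loop_next_insert_incoming[OF e \<open>e \<notin> A\<close>]
  by auto

lemma same_loop_segments_iff:
  assumes L: "L \<ge> 1" and e: "e \<in> torus_edges L" and "e \<in> A"
  shows "same_loop L A (seg1 L e) (seg2 L e) \<longleftrightarrow> strands_joined L A e"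
proof -
  interpret finite_permutation_on "corners L" "loop_next L A"
    by (rule loop_next_permutation[OF L])
  obtain v d where ed: "e = (v, d)" by (metis prod.exhaust)
  have seg1: "seg1 L e \<in> corners L" using e unfolding ed seg1_def torus_simps by auto
  show ?thesis
  proof (cases d)
    case H
    have "seg1 L e = loop_next L A (incoming1 L e)" "seg2 L e = incoming2 L e"
      using \<open>e \<in> A\<close> unfolding ed H seg1_def seg2_def by auto
    then show ?thesis unfolding same_loop_iff_reach[OF L seg1] strands_joined_def
      using reach_succ_left_iff[OF incoming1_in[OF L e]] by simp
  next
    case V
    have "seg1 L e = incoming1 L e" "seg2 L e = loop_next L A (incoming2 L e)"
      using \<open>e \<in> A\<close> e unfolding ed V seg1_def seg2_def by (auto simp: torus_simps)
    then show ?thesis unfolding same_loop_iff_reach[OF L seg1] strands_joined_def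
      using reach_succ_right_iff[OF incoming2_in[OF L e]] by simp
  qed
qed

text \<open>The dual lattice is again an L x L torus, identified with
  the primal one by a half-unit diagonal shift: the dual edge crossing the horizontal edge
  (v, H) becomes the vertical edge at shift_right v, the one crossing (v, V) the horizontal
  edge at shift_up v, and medial edges are rotated by a quarter turn. In the dual
  configuration a dual edge is occupied iff the primal edge it crosses is vacant; it has the
  same loops as the primal one, traversed in the opposite direction.\<close>
fun dual_edge :: "nat \<Rightarrow> edge \<Rightarrow> edge" where
  "dual_edge L (v, H) = (shift_right L v, V)"
| "dual_edge L (v, V) = (shift_up L v, H)"

fun dual_edge_inv :: "nat \<Rightarrow> edge \<Rightarrow> edge" where
  "dual_edge_inv L (v, V) = (shift_left L v, H)"
| "dual_edge_inv L (v, H) = (shift_down L v, V)"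

fun dual_corner :: "nat \<Rightarrow> corner \<Rightarrow> corner" where
  "dual_corner L (f, SW) = (f, NE)"
| "dual_corner L (f, SE) = (shift_right L f, NW)"
| "dual_corner L (f, NE) = (shift_right L (shift_up L f), SW)"
| "dual_corner L (f, NW) = (shift_up L f, SE)"

fun dual_corner_inv :: "nat \<Rightarrow> corner \<Rightarrow> corner" where
  "dual_corner_inv L (f, NE) = (f, SW)"
| "dual_corner_inv L (f, NW) = (shift_left L f, SE)"
| "dual_corner_inv L (f, SW) = (shift_left L (shift_down L f), NE)"
| "dual_corner_inv L (f, SE) = (shift_down L f, NW)"

definition dual_config :: "nat \<Rightarrow> edge set \<Rightarrow> edge set" where
  "dual_config L A = dual_edge L ` (torus_edges L - A)"

lemma dual_edge_in: "L \<ge> 1 \<Longrightarrow> e \<in> torus_edges L \<Longrightarrow> dual_edge L e \<in> torus_edges L"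
  by (cases e, cases "snd e") (auto simp: torus_simps)

lemma dual_edge_inv_in: "L \<ge> 1 \<Longrightarrow> e \<in> torus_edges L \<Longrightarrow> dual_edge_inv L e \<in> torus_edges L"
  by (cases e, cases "snd e") (auto simp: torus_simps)

lemma dual_edge_inv_dual_edge: "e \<in> torus_edges L \<Longrightarrow> dual_edge_inv L (dual_edge L e) = e"
  by (cases e, cases "snd e") (auto simp: torus_simps)

lemma dual_edge_dual_edge_inv: "e \<in> torus_edges L \<Longrightarrow> dual_edge L (dual_edge_inv L e) = e"
  by (cases e, cases "snd e") (auto simp: torus_simps)

lemma bij_betw_dual_edge: "L \<ge> 1 \<Longrightarrow> bij_betw (dual_edge L) (torus_edges L) (torus_edges L)"
  by (rule bij_betw_byWitness[where f' = "dual_edge_inv L"])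
    (auto simp: dual_edge_inv_dual_edge dual_edge_dual_edge_inv dual_edge_in dual_edge_inv_in)

lemma dual_edge_in_dual_config:
  assumes "L \<ge> 1" and "e \<in> torus_edges L"
  shows "dual_edge L e \<in> dual_config L A \<longleftrightarrow> e \<notin> A"
  using assms bij_betw_dual_edge[OF assms(1)] unfolding dual_config_def bij_betw_def
  by (auto simp: inj_on_eq_iff)

lemma bij_betw_dual_config:
  assumes L: "L \<ge> 1"
  shows "bij_betw (dual_config L) (Pow (torus_edges L)) (Pow (torus_edges L))"
proof -
  have "bij_betw (\<lambda>A. torus_edges L - A) (Pow (torus_edges L)) (Pow (torus_edges L))"
    by (rule bij_betw_byWitness[where f' = "\<lambda>A. torus_edges L - A"]) auto
  then show ?thesis
    using bij_betw_trans[OF _ bij_betw_image_Pow[OF bij_betw_dual_edge[OF L]]]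
    unfolding dual_config_def comp_def by blast
qed

lemma inj_on_dual_corner: "inj_on (dual_corner L) (corners L)"
proof (rule inj_on_inverseI)
  show "p \<in> corners L \<Longrightarrow> dual_corner_inv L (dual_corner L p) = p" for p
    by (cases p, cases "snd p") (auto simp: torus_simps)
qed

lemma loop_next_dual_config:
  assumes L: "L \<ge> 1" and p: "p \<in> corners L"
  shows "loop_next L (dual_config L A) (dual_corner L (loop_next L A p)) = dual_corner L p"
proof -
  obtain i j q where pq: "p = ((i, j), q)" by (metis prod.exhaust)
  have ij: "(i, j) \<in> torus_vertices L" using p unfolding pq corners_def by auto
  then have "shift_up L (i, j) \<in> torus_vertices L" "shift_right L (i, j) \<in> torus_vertices L"
    using L by (auto simp: torus_simps)
  then have "dual_edge L (v, d) \<in> dual_config L A \<longleftrightarrow> (v, d) \<notin> A"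
    if "v \<in> {(i, j), shift_up L (i, j), shift_right L (i, j)}" for v d
    using that ij dual_edge_in_dual_config[OF L] unfolding torus_edges_def by blast
  from this[of "(i, j)" H] this[of "(i, j)" V] this[of "shift_up L (i, j)" H]
    this[of "shift_right L (i, j)" V]
  show ?thesis using ij unfolding pq by (cases q) (auto simp: torus_simps)
qed

lemma dual_corner_outgoing:
  assumes "L \<ge> 1" and "e \<in> torus_edges L"
  shows "{dual_corner L (loop_next L A (incoming1 L e)), dual_corner L (loop_next L A (incoming2 L e))}
    = {incoming1 L (dual_edge L e), incoming2 L (dual_edge L e)}"
proof -
  obtain a b d where e: "e = ((a, b), d)" by (metis prod.exhaust)
  show ?thesis using assms unfolding e by (cases d; cases "((a, b), d) \<in> A") (auto simp: torus_simps)
qed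

lemma strands_joined_dual_config:
  assumes L: "L \<ge> 1" and e: "e \<in> torus_edges L"
  shows "strands_joined L (dual_config L A) (dual_edge L e) \<longleftrightarrow> strands_joined L A e"
proof -
  interpret finite_permutation_on "corners L" "loop_next L A"
    by (rule loop_next_permutation[OF L])
  let ?f = "loop_next L A" and ?g = "loop_next L (dual_config L A)"
  let ?p = "incoming1 L e" and ?q = "incoming2 L e"
  have p: "?p \<in> corners L" and q: "?q \<in> corners L" using incoming1_in incoming2_in L e by auto
  have reverse: "\<forall>x\<in>corners L. ?g (dual_corner L (?f x)) = dual_corner L x"
    using loop_next_dual_config[OF L] by blast
  have dual: "reach ?g (dual_corner L x) (dual_corner L y) \<longleftrightarrow> reach ?f y x"
    if "x \<in> corners L" "y \<in> corners L" for x y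
    using reach_reverse_conj[OF inj_on_dual_corner reverse that] .
  have out_qp: "reach ?f (?f ?q) (?f ?p) \<longleftrightarrow> reach ?f ?p ?q"
    using reach_succ_left_iff[OF q] reach_succ_right_iff[OF p] reach_sym p q by blast
  have out_pq: "reach ?f (?f ?p) (?f ?q) \<longleftrightarrow> reach ?f ?p ?q"
    using reach_succ_left_iff[OF p] reach_succ_right_iff[OF q] by blast
  from dual_corner_outgoing[OF L e, of A] incoming1_neq_incoming2[of L "dual_edge L e"]
  consider "incoming1 L (dual_edge L e) = dual_corner L (?f ?p)"
      "incoming2 L (dual_edge L e) = dual_corner L (?f ?q)"
    | "incoming1 L (dual_edge L e) = dual_corner L (?f ?q)"
      "incoming2 L (dual_edge L e) = dual_corner L (?f ?p)"
    by (auto simp: doubleton_eq_iff)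
  then show ?thesis
    unfolding strands_joined_def
    by cases (simp_all add: dual maps_to p q out_qp out_pq)
qed

lemma card_filter_bij_betw: "bij_betw h X Y \<Longrightarrow> card {x \<in> X. Q (h x)} = card {y \<in> Y. Q y}"
  by (rule bij_betw_same_card[of h]) (auto simp: bij_betw_def inj_on_def)

lemma sum_card_filter_Pow_swap:
  assumes "finite E"
  shows "(\<Sum>A\<in>Pow E. card {e \<in> A. Q A e}) = (\<Sum>e\<in>E. card {A \<in> Pow E. e \<in> A \<and> Q A e})"
proof -
  have "(\<Sum>A\<in>Pow E. card {e \<in> A. Q A e}) = (\<Sum>A\<in>Pow E. \<Sum>e\<in>E. of_bool (e \<in> A \<and> Q A e))"
    using assms by (intro sum.cong) (auto intro!: arg_cong[where f = card])
  also have "\<dots> = (\<Sum>e\<in>E. \<Sum>A\<in>Pow E. of_bool (e \<in> A \<and> Q A e))"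
    by (rule sum.swap)
  also have "\<dots> = (\<Sum>e\<in>E. card {A \<in> Pow E. e \<in> A \<and> Q A e})"
    using assms by (intro sum.cong) (auto intro!: arg_cong[where f = card])
  finally show ?thesis .
qed

lemma sum_card_Pow: "finite E \<Longrightarrow> 2 * (\<Sum>A\<in>Pow E. card A) = card E * card (Pow E)"
proof -
  assume fE: "finite E"
  have "bij_betw (\<lambda>A. E - A) (Pow E) (Pow E)"
    by (rule bij_betw_byWitness[where f' = "\<lambda>A. E - A"]) auto
  then have "(\<Sum>A\<in>Pow E. card A) = (\<Sum>A\<in>Pow E. card (E - A))"
    using sum.reindex_bij_betw[of _ "Pow E" "Pow E" card] by simp
  then have "2 * (\<Sum>A\<in>Pow E. card A) = (\<Sum>A\<in>Pow E. card A + card (E - A))"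
    by (simp add: sum.distrib)
  also have "\<dots> = (\<Sum>A\<in>Pow E. card E)"
    using fE by (intro sum.cong) (auto simp: card_Diff_subset finite_subset card_mono)
  finally show ?thesis by simp
qed

lemma N1_eq_card_joined:
  assumes "L \<ge> 1" and "A \<subseteq> torus_edges L"
  shows "N1 L A = card {e \<in> A. strands_joined L A e}"
  unfolding N1_def using assms same_loop_segments_iff by (metis subsetD)

lemma N2_eq_card_split:
  assumes "L \<ge> 1" and "A \<subseteq> torus_edges L"
  shows "N2 L A = card {e \<in> A. \<not> strands_joined L A e}"
  unfolding N2_def using assms same_loop_segments_iff by (metis subsetD)

lemma N1_add_N2:
  assumes "L \<ge> 1" and "A \<subseteq> torus_edges L"
  shows "N1 L A + N2 L A = card A"
proof -
  have "finite A" using assms(2) finite_torus_edges finite_subset by blast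
  then show ?thesis
    unfolding N1_eq_card_joined[OF assms] N2_eq_card_split[OF assms]
    by (subst card_Un_disjoint[symmetric]) (auto intro: arg_cong[where f = card])
qed

lemma card_joined_occupied_eq_dual:
  assumes L: "L \<ge> 1" and e: "e \<in> torus_edges L"
  shows "card {A \<in> Pow (torus_edges L). e \<in> A \<and> strands_joined L A e}
       = card {A \<in> Pow (torus_edges L). dual_edge L e \<notin> A \<and> strands_joined L A (dual_edge L e)}"
proof -
  have "{A \<in> Pow (torus_edges L). e \<in> A \<and> strands_joined L A e}
      = {A \<in> Pow (torus_edges L). dual_edge L e \<notin> dual_config L A
           \<and> strands_joined L (dual_config L A) (dual_edge L e)}"
    using dual_edge_in_dual_config[OF L e] strands_joined_dual_config[OF L e] by auto
  then show ?thesis using card_filter_bij_betw[OF bij_betw_dual_config[OF L]] by simp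
qed

lemma card_joined_vacant_eq_split_occupied:
  assumes L: "L \<ge> 1" and e: "e \<in> torus_edges L"
  shows "card {A \<in> Pow (torus_edges L). e \<notin> A \<and> strands_joined L A e}
       = card {A \<in> Pow (torus_edges L). e \<in> A \<and> \<not> strands_joined L A e}"
proof (rule bij_betw_same_card[of "insert e"], rule bij_betw_byWitness[where f' = "\<lambda>B. B - {e}"])
  show "insert e ` {A \<in> Pow (torus_edges L). e \<notin> A \<and> strands_joined L A e}
      \<subseteq> {A \<in> Pow (torus_edges L). e \<in> A \<and> \<not> strands_joined L A e}"
    using strands_joined_insert[OF L e] e by auto
  show "(\<lambda>B. B - {e}) ` {A \<in> Pow (torus_edges L). e \<in> A \<and> \<not> strands_joined L A e}
      \<subseteq> {A \<in> Pow (torus_edges L). e \<notin> A \<and> strands_joined L A e}"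
  proof (rule image_subsetI)
    fix B assume "B \<in> {A \<in> Pow (torus_edges L). e \<in> A \<and> \<not> strands_joined L A e}"
    moreover have "insert e (B - {e}) = B" if "e \<in> B" using that by auto
    ultimately show "B - {e} \<in> {A \<in> Pow (torus_edges L). e \<notin> A \<and> strands_joined L A e}"
      using strands_joined_insert[OF L e, of "B - {e}"] by auto
  qed
qed auto

lemma sum_N1_eq_sum_N2:
  assumes L: "L \<ge> 1"
  shows "(\<Sum>A\<in>Pow (torus_edges L). N1 L A) = (\<Sum>A\<in>Pow (torus_edges L). N2 L A)"
proof -
  let ?E = "torus_edges L"
  let ?vacant = "\<lambda>e. card {A \<in> Pow ?E. e \<notin> A \<and> strands_joined L A e}"
  have "(\<Sum>A\<in>Pow ?E. N1 L A) = (\<Sum>A\<in>Pow ?E. card {e \<in> A. strands_joined L A e})"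
    using N1_eq_card_joined[OF L] by (intro sum.cong) auto
  also have "\<dots> = (\<Sum>e\<in>?E. card {A \<in> Pow ?E. e \<in> A \<and> strands_joined L A e})"
    by (rule sum_card_filter_Pow_swap[OF finite_torus_edges])
  also have "\<dots> = (\<Sum>e\<in>?E. ?vacant (dual_edge L e))"
    using card_joined_occupied_eq_dual[OF L] by (rule sum.cong[OF refl])
  also have "\<dots> = (\<Sum>e\<in>?E. ?vacant e)"
    by (rule sum.reindex_bij_betw[OF bij_betw_dual_edge[OF L]])
  also have "\<dots> = (\<Sum>e\<in>?E. card {A \<in> Pow ?E. e \<in> A \<and> \<not> strands_joined L A e})"
    using card_joined_vacant_eq_split_occupied[OF L] by (rule sum.cong[OF refl])
  also have "\<dots> = (\<Sum>A\<in>Pow ?E. card {e \<in> A. \<not> strands_joined L A e})"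
    by (rule sum_card_filter_Pow_swap[OF finite_torus_edges, symmetric])
  also have "\<dots> = (\<Sum>A\<in>Pow ?E. N2 L A)"
    using N2_eq_card_split[OF L] by (intro sum.cong) auto
  finally show ?thesis .
qed

lemma sum_N1_sum_N2_quarter:
  assumes "L \<ge> 1"
  shows "4 * (\<Sum>A\<in>Pow (torus_edges L). N1 L A) = card (torus_edges L) * card (Pow (torus_edges L))"
    and "4 * (\<Sum>A\<in>Pow (torus_edges L). N2 L A) = card (torus_edges L) * card (Pow (torus_edges L))"
proof -
  have "(\<Sum>A\<in>Pow (torus_edges L). N1 L A) + (\<Sum>A\<in>Pow (torus_edges L). N2 L A)
      = (\<Sum>A\<in>Pow (torus_edges L). card A)"
    using N1_add_N2[OF assms] by (simp add: sum.distrib[symmetric])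
  then show "4 * (\<Sum>A\<in>Pow (torus_edges L). N1 L A) = card (torus_edges L) * card (Pow (torus_edges L))"
    and "4 * (\<Sum>A\<in>Pow (torus_edges L). N2 L A) = card (torus_edges L) * card (Pow (torus_edges L))"
    using sum_card_Pow[OF finite_torus_edges[of L]] sum_N1_eq_sum_N2[OF assms] by linarith+
qed

theorem lemma1:
  fixes L :: nat
  assumes "L \<ge> 1"
  shows "measure_pmf.expectation (perc_half L)
           (\<lambda>A. real (N1 L A) / real (card (torus_edges L))) = 1 / 4
       \<and> measure_pmf.expectation (perc_half L)
           (\<lambda>A. real (N2 L A) / real (card (torus_edges L))) = 1 / 4"
proof -
  let ?E = "torus_edges L"
  have "((0, 0), H) \<in> ?E" using assms by (simp add: torus_edges_def torus_vertices_def)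
  then have m: "card ?E > 0" using finite_torus_edges card_gt_0_iff by blast
  have expectation: "measure_pmf.expectation (perc_half L) (\<lambda>A. real (N A) / real (card ?E))
      = real (\<Sum>A\<in>Pow ?E. N A) / real (card ?E) / real (card (Pow ?E))" for N
    unfolding perc_half_def
      integral_pmf_of_set[OF Pow_not_empty finite_Pow_iff[THEN iffD2, OF finite_torus_edges]]
    by (simp add: sum_divide_distrib[symmetric])
  have quarter: "real s / real (card ?E) / real (card (Pow ?E)) = 1 / 4"
    if "4 * s = card ?E * card (Pow ?E)" for s
  proof -
    have "4 * real s = real (card ?E) * real (card (Pow ?E))"
      using arg_cong[OF that, of real] by simp
    moreover have "card (Pow ?E) > 0" using finite_torus_edges card_gt_0_iff by blast
    ultimately show ?thesis using m by (simp add: field_simps)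
  qed
  show ?thesis
    unfolding expectation[of "N1 L"] expectation[of "N2 L"]
    using quarter[OF sum_N1_sum_N2_quarter(1)[OF assms]] quarter[OF sum_N1_sum_N2_quarter(2)[OF assms]]
    by blast
qed

end
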